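(* Let $A\in\mathbb{R}^{m\times n}$, $b\in\mathbb{R}^m$, and let $Q_k=(q_1,\dots,q_k)$, $k=1,2,\dots$, be the matrices with orthonormal columns generated by the Golub–Kahan bidiagonalization of $A$ started with $b$ (described in the context). For each $k$ let $Q_k^{\perp}\in\mathbb{R}^{n\times(n-k)}$ be a matrix with orthonormal columns such that $(Q_k\ \ Q_k^{\perp})$ is an orthogonal matrix. Let $L\in\mathbb{R}^{p\times n}$. When $p\ge n-k$, we have $$\kappa(LQ_k^{\perp})\ \ge\ \kappa(LQ_{k+1}^{\perp}),\qquad k=2,3,\dots,n-1,$$ where for a matrix $M$ with $r$ columns, $\kappa(M)=\sigma_{\max}(M)/\sigma_{\min}(M)$, $\sigma_{\min}(M)$ being the $r$-th (smallest) singular value of $M$.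
   Context: Golub–Kahan bidiagonalization: set $\beta_1=\|b\|$, $p_1=b/\beta_1$, $\beta_1q_0=0$, and for $i=1,2,\dots$ compute $\alpha_iq_i=A^Tp_i-\beta_iq_{i-1}$ and $\beta_{i+1}p_{i+1}=Aq_i-\alpha_ip_i$, with $\alpha_i,\beta_{i+1}\ge0$ chosen so that $\|q_i\|=\|p_{i+1}\|=1$ (no breakdown assumed). The vectors $q_1,q_2,\dots$ are orthonormal and $Q_k=(q_1,\dots,q_k)$. *)

theory Defs
  imports "Jordan_Normal_Form.Matrix" "Jordan_Normal_Form.Char_Poly" "HOL-Library.Extended_Real"
begin

definition vnorm :: "real vec \<Rightarrow> real" where
  "vnorm v = sqrt (v \<bullet> v)"

definition orthonormal_cols :: "real mat \<Rightarrow> bool" where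
  "orthonormal_cols M \<longleftrightarrow> transpose_mat M * M = 1\<^sub>m (dim_col M)"

definition hcat :: "'a mat \<Rightarrow> 'a mat \<Rightarrow> 'a mat" where
  "hcat M N = mat (dim_row M) (dim_col M + dim_col N)
     (\<lambda>(i,j). if j < dim_col M then M $$ (i,j) else N $$ (i, j - dim_col M))"

definition orthogonal_square :: "real mat \<Rightarrow> bool" where
  "orthogonal_square M \<longleftrightarrow> dim_row M = dim_col M \<and> transpose_mat M * M = 1\<^sub>m (dim_col M)"

definition singular_values :: "real mat \<Rightarrow> real set" where
  "singular_values M = {sqrt e | e. eigenvalue (transpose_mat M * M) e}"

definition sigma_max :: "real mat \<Rightarrow> real" where
  "sigma_max M = Max (singular_values M)"

definition sigma_min :: "real mat \<Rightarrow> real" where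
  "sigma_min M = Min (singular_values M)"

definition kappa :: "real mat \<Rightarrow> ereal" where
  "kappa M = (if dim_col M = 0 then 1
              else if sigma_min M = 0 then \<infinity>
              else ereal (sigma_max M / sigma_min M))"

definition Qmat :: "nat \<Rightarrow> (nat \<Rightarrow> real vec) \<Rightarrow> nat \<Rightarrow> real mat" where
  "Qmat n q k = mat_of_cols n (map q [1..<Suc k])"

end

theory Submission
  imports Defs "HOL-Analysis.Function_Topology"
begin

(* None of the Golub-Kahan recurrences is needed, only that Q_k consists of the first k
   columns of Q_(k+1); neither is the hypothesis p >= n - k.  From
   Q_k Q_k^T + Q_k^perp (Q_k^perp)^T = I and Q_k^T Q_(k+1)^perp = 0 one gets
   Q_(k+1)^perp = Q_k^perp W, where W = (Q_k^perp)^T Q_(k+1)^perp has orthonormal columns.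
   The extreme singular values of M are the square roots of the extreme values of the
   Rayleigh quotient of M^T M, i.e. of |M x|^2 / |x|^2.  Since |W y| = |y|, the quotients of
   L Q_(k+1)^perp = (L Q_k^perp) W form a subset of those of L Q_k^perp, so sigma_max can only
   decrease and sigma_min only increase. *)

lemma scalar_prod_self_nonneg: "0 \<le> (v :: real vec) \<bullet> v"
  using conjugate_square_ge_0_vec[of v] by simp

lemma scalar_prod_self_eq_0_iff:
  "(v :: real vec) \<in> carrier_vec n \<Longrightarrow> v \<bullet> v = 0 \<longleftrightarrow> v = 0\<^sub>v n"
  using conjugate_square_eq_0_vec[of v n] by simp

lemma scalar_prod_self_pos:
  "(v :: real vec) \<in> carrier_vec n \<Longrightarrow> v \<noteq> 0\<^sub>v n \<Longrightarrow> 0 < v \<bullet> v"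
  using scalar_prod_self_nonneg[of v] scalar_prod_self_eq_0_iff[of v n] by simp

lemma unit_sphere_attains_max:
  fixes g :: "real vec \<Rightarrow> real"
  assumes r: "0 < r" and cont: "continuous_on UNIV (\<lambda>h. g (vec r h))"
  shows "\<exists>x0\<in>carrier_vec r. x0 \<bullet> x0 = 1 \<and> (\<forall>x\<in>carrier_vec r. x \<bullet> x = 1 \<longrightarrow> g x \<le> g x0)"
proof -
  (* pinning the coordinates from r on to 0 makes the sphere compact in nat => real *)
  define T where "T = (\<lambda>i::nat. if i < r then {-1..1::real} else {0})"
  define S where "S = Pi UNIV T \<inter> {h. (\<Sum>i<r. (h i)\<^sup>2) = 1}"
  have norm_vec: "vec r h \<bullet> vec r h = (\<Sum>i<r. (h i)\<^sup>2)" for h :: "nat \<Rightarrow> real"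
    unfolding scalar_prod_def power2_eq_square by (simp add: atLeast0LessThan)
  have "compactin (product_topology (\<lambda>i. euclidean) UNIV) (PiE UNIV T)"
    by (subst compactin_PiE) (auto simp: T_def)
  then have "compact (Pi UNIV T)"
    by (simp add: euclidean_product_topology PiE_UNIV_domain)
  moreover have "closed {h :: nat \<Rightarrow> real. (\<Sum>i<r. (h i)\<^sup>2) = 1}"
    by (intro closed_Collect_eq continuous_intros) auto
  ultimately have "compact S"
    unfolding S_def by blast
  have restrict_mem: "(\<lambda>i. if i < r then x $ i else 0) \<in> S"
    if x: "x \<in> carrier_vec r" "x \<bullet> x = 1" for x :: "real vec"
  proof -
    define h where "h = (\<lambda>i. if i < r then x $ i else 0)"
    have "vec r h = x"
      using x by (auto simp: h_def)
    then have h1: "(\<Sum>i<r. (h i)\<^sup>2) = 1"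
      using x norm_vec[of h] by simp
    have "\<bar>h i\<bar> \<le> 1" if "i < r" for i
    proof -
      have "(h i)\<^sup>2 \<le> (\<Sum>i<r. (h i)\<^sup>2)"
        by (rule member_le_sum) (use that in auto)
      then show ?thesis
        using h1 abs_le_square_iff[of "h i" 1] by simp
    qed
    then show ?thesis
      using h1 by (auto simp: S_def T_def h_def abs_le_iff)
  qed
  have "S \<noteq> {}"
    using restrict_mem[of "unit_vec r 0"] r by auto
  then obtain h0 where h0: "h0 \<in> S" and max: "\<And>h. h \<in> S \<Longrightarrow> g (vec r h) \<le> g (vec r h0)"
    using continuous_attains_sup[OF \<open>compact S\<close> _ continuous_on_subset[OF cont]] by blast
  show ?thesis
  proof (intro bexI conjI ballI impI)
    show "vec r h0 \<bullet> vec r h0 = 1"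
      using h0 norm_vec by (simp add: S_def)
    fix x :: "real vec" assume x: "x \<in> carrier_vec r" "x \<bullet> x = 1"
    have "vec r (\<lambda>i. if i < r then x $ i else 0) = x"
      using x by auto
    then show "g x \<le> g (vec r h0)"
      using max[OF restrict_mem[OF x]] by simp
  qed simp
qed

lemma psd_quadratic_form_eq_0_imp_mult_eq_0:
  fixes G :: "real mat"
  assumes G: "G \<in> carrier_mat r r" and sym: "transpose_mat G = G"
    and psd: "\<And>y. y \<in> carrier_vec r \<Longrightarrow> 0 \<le> y \<bullet> (G *\<^sub>v y)"
    and x: "x \<in> carrier_vec r" and zero: "x \<bullet> (G *\<^sub>v x) = 0"
  shows "G *\<^sub>v x = 0\<^sub>v r"
proof -
  define w where "w = G *\<^sub>v x"
  define h where "h = w \<bullet> w"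
  define K where "K = w \<bullet> (G *\<^sub>v w)"
  have w: "w \<in> carrier_vec r" and Gw: "G *\<^sub>v w \<in> carrier_vec r"
    using G x by (auto simp: w_def)
  have xGw: "x \<bullet> (G *\<^sub>v w) = h"
    using transpose_vec_mult_scalar[OF G w x] comm_scalar_prod[OF Gw x] sym
    by (simp add: h_def w_def)
  have wGx: "w \<bullet> (G *\<^sub>v x) = h"
    by (simp add: h_def w_def)
  have expand: "(x - t \<cdot>\<^sub>v w) \<bullet> (G *\<^sub>v (x - t \<cdot>\<^sub>v w)) = t * t * K - 2 * t * h" for t
    using G x w Gw zero xGw wGx
    by (simp add: mult_minus_distrib_mat_vec[of G r r] mult_mat_vec[of G r r]
        minus_scalar_prod_distrib[of _ r] scalar_prod_minus_distrib[of _ r] K_def algebra_simps)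
  have "0 \<le> K"
    unfolding K_def using psd[OF w] .
  have "0 \<le> t * t * K - 2 * t * h" for t
    using psd[of "x - t \<cdot>\<^sub>v w"] x w expand[of t] by simp
  moreover have "(h / (K + 1)) * (h / (K + 1)) * K - 2 * (h / (K + 1)) * h
      = - (h * h * (K + 2)) / ((K + 1) * (K + 1))"
    using \<open>0 \<le> K\<close> by (simp add: field_simps add_nonneg_eq_0_iff)
  ultimately have "0 \<le> - (h * h * (K + 2)) / ((K + 1) * (K + 1))"
    by metis
  moreover have "0 < (K + 1) * (K + 1)"
    using \<open>0 \<le> K\<close> by simp
  ultimately have "h * h * (K + 2) \<le> 0"
    by (simp add: pos_divide_le_eq)
  then have "h = 0"
    using \<open>0 \<le> K\<close> by (auto simp: mult_le_0_iff)
  then show ?thesis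
    using scalar_prod_self_eq_0_iff[OF w] by (simp add: h_def w_def)
qed

lemma quadratic_form_continuous:
  fixes G :: "real mat"
  assumes G: "G \<in> carrier_mat r r"
  shows "continuous_on UNIV (\<lambda>h. vec r h \<bullet> (G *\<^sub>v vec r h))"
proof -
  have "vec r h \<bullet> (G *\<^sub>v vec r h) = (\<Sum>i<r. h i * (\<Sum>j<r. G $$ (i, j) * h j))" for h
    using G by (auto simp: scalar_prod_def atLeast0LessThan row_def intro!: sum.cong)
  then show ?thesis
    by (simp add: continuous_intros)
qed

lemma eigenvalue_imp_quadratic_form:
  fixes G :: "real mat"
  assumes G: "G \<in> carrier_mat r r" and e: "eigenvalue G e"
  shows "\<exists>v\<in>carrier_vec r. v \<noteq> 0\<^sub>v r \<and> v \<bullet> (G *\<^sub>v v) = e * (v \<bullet> v)"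
  using e G unfolding eigenvalue_def eigenvector_def by auto

lemma symmetric_max_eigenvalue:
  fixes G :: "real mat"
  assumes G: "G \<in> carrier_mat r r" and sym: "transpose_mat G = G" and r: "0 < r"
  shows "\<exists>c. eigenvalue G c \<and> (\<forall>x\<in>carrier_vec r. x \<bullet> (G *\<^sub>v x) \<le> c * (x \<bullet> x))"
proof -
  obtain x0 where x0: "x0 \<in> carrier_vec r" "x0 \<bullet> x0 = 1"
    and max: "\<And>u. u \<in> carrier_vec r \<Longrightarrow> u \<bullet> u = 1 \<Longrightarrow> u \<bullet> (G *\<^sub>v u) \<le> x0 \<bullet> (G *\<^sub>v x0)"
    using unit_sphere_attains_max[OF r quadratic_form_continuous[OF G]] by blast
  define c where "c = x0 \<bullet> (G *\<^sub>v x0)"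
  have bound: "x \<bullet> (G *\<^sub>v x) \<le> c * (x \<bullet> x)" if x: "x \<in> carrier_vec r" for x
  proof (cases "x = 0\<^sub>v r")
    case True
    then show ?thesis
      using G by simp
  next
    case False
    define d where "d = x \<bullet> x"
    have "0 < d"
      unfolding d_def using scalar_prod_self_pos[OF x False] .
    define u where "u = (1 / sqrt d) \<cdot>\<^sub>v x"
    have u: "u \<in> carrier_vec r"
      using x by (simp add: u_def)
    have "u \<bullet> u = 1" and "u \<bullet> (G *\<^sub>v u) = (x \<bullet> (G *\<^sub>v x)) / d"
      using x G \<open>0 < d\<close> by (simp_all add: u_def d_def mult_mat_vec[of G r r])
    then show ?thesis
      using max[OF u] \<open>0 < d\<close> by (simp add: c_def d_def divide_le_eq)
  qed
  define H where "H = c \<cdot>\<^sub>m 1\<^sub>m r - G"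
  have H: "H \<in> carrier_mat r r"
    using G by (simp add: H_def minus_carrier_mat)
  have Hv: "H *\<^sub>v y = c \<cdot>\<^sub>v y - G *\<^sub>v y" if "y \<in> carrier_vec r" for y
  proof -
    have "(c \<cdot>\<^sub>m 1\<^sub>m r) *\<^sub>v y = c \<cdot>\<^sub>v y"
      using that by (intro eq_vecI) auto
    then show ?thesis
      using that G by (simp add: H_def minus_mult_distrib_mat_vec[of _ r r])
  qed
  have "H *\<^sub>v x0 = 0\<^sub>v r"
  proof (rule psd_quadratic_form_eq_0_imp_mult_eq_0[OF H _ _ x0(1)])
    have "transpose_mat (c \<cdot>\<^sub>m 1\<^sub>m r) = c \<cdot>\<^sub>m 1\<^sub>m r"
      by (intro eq_matI) auto
    then show "transpose_mat H = H"
      using G sym by (simp add: H_def transpose_minus[of _ r r])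
    show "0 \<le> y \<bullet> (H *\<^sub>v y)" if "y \<in> carrier_vec r" for y
      using bound[OF that] that G by (simp add: Hv scalar_prod_minus_distrib[of _ r])
    show "x0 \<bullet> (H *\<^sub>v x0) = 0"
      using x0 G by (simp add: Hv scalar_prod_minus_distrib[of _ r] c_def)
  qed
  then have "G *\<^sub>v x0 = c \<cdot>\<^sub>v x0"
    using x0 G by (auto simp: Hv vec_eq_iff)
  moreover have "x0 \<noteq> 0\<^sub>v r"
    using x0 by auto
  ultimately have "eigenvalue G c"
    using x0 G by (auto simp: eigenvalue_def eigenvector_def)
  then show ?thesis
    using bound by blast
qed

lemma symmetric_min_eigenvalue:
  fixes G :: "real mat"
  assumes G: "G \<in> carrier_mat r r" and sym: "transpose_mat G = G" and r: "0 < r"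
  shows "\<exists>c. eigenvalue G c \<and> (\<forall>x\<in>carrier_vec r. c * (x \<bullet> x) \<le> x \<bullet> (G *\<^sub>v x))"
proof -
  have "- G \<in> carrier_mat r r" and "transpose_mat (- G) = - G"
    using G sym by (simp_all add: transpose_uminus)
  then obtain c where c: "eigenvalue (- G) c"
    and bound: "\<forall>x\<in>carrier_vec r. x \<bullet> (- G *\<^sub>v x) \<le> c * (x \<bullet> x)"
    using symmetric_max_eigenvalue[OF _ _ r] by blast
  have "eigenvalue G (- c)"
  proof -
    obtain v where v: "v \<in> carrier_vec r" "v \<noteq> 0\<^sub>v r" and ev: "- G *\<^sub>v v = c \<cdot>\<^sub>v v"
      using c G unfolding eigenvalue_def eigenvector_def by auto
    have "G *\<^sub>v v = - (- G *\<^sub>v v)"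
      using G v by simp
    also have "\<dots> = (- c) \<cdot>\<^sub>v v"
      unfolding ev by (intro eq_vecI) auto
    finally have "G *\<^sub>v v = (- c) \<cdot>\<^sub>v v" .
    then show ?thesis
      using v G unfolding eigenvalue_def eigenvector_def by auto
  qed
  moreover have "- c * (x \<bullet> x) \<le> x \<bullet> (G *\<^sub>v x)" if "x \<in> carrier_vec r" for x
    using bspec[OF bound that] that G by simp
  ultimately show ?thesis
    by blast
qed

lemma gram_quadratic_form:
  fixes M :: "real mat"
  assumes M: "M \<in> carrier_mat p r" and x: "x \<in> carrier_vec r"
  shows "x \<bullet> ((transpose_mat M * M) *\<^sub>v x) = (M *\<^sub>v x) \<bullet> (M *\<^sub>v x)"
proof -
  have "(transpose_mat M * M) *\<^sub>v x = transpose_mat M *\<^sub>v (M *\<^sub>v x)"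
    using M x by simp
  then show ?thesis
    using M x transpose_vec_mult_scalar[OF M x, of "M *\<^sub>v x"]
      comm_scalar_prod[of x r "transpose_mat M *\<^sub>v (M *\<^sub>v x)"] by simp
qed

lemma gram_symmetric:
  fixes M :: "'a :: comm_semiring_0 mat"
  assumes "M \<in> carrier_mat p r"
  shows "transpose_mat (transpose_mat M * M) = transpose_mat M * M"
  using assms by (subst transpose_mult[of _ r p _ r]) auto

lemma gram_eigenvalue_nonneg:
  fixes M :: "real mat"
  assumes M: "M \<in> carrier_mat p r" and e: "eigenvalue (transpose_mat M * M) e"
  shows "0 \<le> e"
proof -
  obtain v where v: "v \<in> carrier_vec r" "v \<noteq> 0\<^sub>v r"
    and "v \<bullet> ((transpose_mat M * M) *\<^sub>v v) = e * (v \<bullet> v)"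
    using eigenvalue_imp_quadratic_form[of _ r, OF _ e] M by auto
  then have "0 \<le> e * (v \<bullet> v)"
    using gram_quadratic_form[OF M v(1)] scalar_prod_self_nonneg[of "M *\<^sub>v v"] by simp
  then show ?thesis
    using scalar_prod_self_pos[OF v] by (simp add: zero_le_mult_iff)
qed

lemma finite_eigenvalues:
  fixes G :: "'a :: field mat"
  assumes G: "G \<in> carrier_mat r r"
  shows "finite {e. eigenvalue G e}"
proof -
  have "char_poly G \<noteq> 0"
    using degree_monic_char_poly[OF G] by auto
  then show ?thesis
    using poly_roots_finite[of "char_poly G"] eigenvalue_root_char_poly[OF G] by simp
qed

lemma sigma_max_variational:
  fixes M :: "real mat"
  assumes M: "M \<in> carrier_mat p r" and r: "0 < r"
  shows "0 \<le> sigma_max M"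
    and "\<forall>x\<in>carrier_vec r. (M *\<^sub>v x) \<bullet> (M *\<^sub>v x) \<le> (sigma_max M)\<^sup>2 * (x \<bullet> x)"
    and "\<exists>x\<in>carrier_vec r. x \<noteq> 0\<^sub>v r \<and> (M *\<^sub>v x) \<bullet> (M *\<^sub>v x) = (sigma_max M)\<^sup>2 * (x \<bullet> x)"
proof -
  define G where "G = transpose_mat M * M"
  have G: "G \<in> carrier_mat r r"
    using M by (simp add: G_def)
  obtain c where c: "eigenvalue G c" and bound: "\<forall>x\<in>carrier_vec r. x \<bullet> (G *\<^sub>v x) \<le> c * (x \<bullet> x)"
    using symmetric_max_eigenvalue[OF G gram_symmetric[OF M, folded G_def] r] by blast
  have "e \<le> c" if e: "eigenvalue G e" for e
  proof -
    obtain v where v: "v \<in> carrier_vec r" "v \<noteq> 0\<^sub>v r" and "v \<bullet> (G *\<^sub>v v) = e * (v \<bullet> v)"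
      using eigenvalue_imp_quadratic_form[OF G e] by blast
    then show ?thesis
      using bound scalar_prod_self_pos[OF v] by (auto simp: mult_le_cancel_right)
  qed
  then have sigma_eq: "sigma_max M = sqrt c"
    unfolding sigma_max_def singular_values_def G_def[symmetric]
    using finite_eigenvalues[OF G] c by (intro Max_eqI) auto
  have c_nonneg: "0 \<le> c"
    using gram_eigenvalue_nonneg[OF M] c by (simp add: G_def)
  then have sq: "(sigma_max M)\<^sup>2 = c"
    by (simp add: sigma_eq)
  show "0 \<le> sigma_max M"
    using c_nonneg by (simp add: sigma_eq)
  show "\<forall>x\<in>carrier_vec r. (M *\<^sub>v x) \<bullet> (M *\<^sub>v x) \<le> (sigma_max M)\<^sup>2 * (x \<bullet> x)"
    using bound gram_quadratic_form[OF M] by (simp add: sq G_def)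
  show "\<exists>x\<in>carrier_vec r. x \<noteq> 0\<^sub>v r \<and> (M *\<^sub>v x) \<bullet> (M *\<^sub>v x) = (sigma_max M)\<^sup>2 * (x \<bullet> x)"
    using eigenvalue_imp_quadratic_form[OF G c] gram_quadratic_form[OF M] by (auto simp: sq G_def)
qed

lemma sigma_min_variational:
  fixes M :: "real mat"
  assumes M: "M \<in> carrier_mat p r" and r: "0 < r"
  shows "0 \<le> sigma_min M"
    and "\<forall>x\<in>carrier_vec r. (sigma_min M)\<^sup>2 * (x \<bullet> x) \<le> (M *\<^sub>v x) \<bullet> (M *\<^sub>v x)"
    and "\<exists>x\<in>carrier_vec r. x \<noteq> 0\<^sub>v r \<and> (M *\<^sub>v x) \<bullet> (M *\<^sub>v x) = (sigma_min M)\<^sup>2 * (x \<bullet> x)"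
proof -
  define G where "G = transpose_mat M * M"
  have G: "G \<in> carrier_mat r r"
    using M by (simp add: G_def)
  obtain c where c: "eigenvalue G c" and bound: "\<forall>x\<in>carrier_vec r. c * (x \<bullet> x) \<le> x \<bullet> (G *\<^sub>v x)"
    using symmetric_min_eigenvalue[OF G gram_symmetric[OF M, folded G_def] r] by blast
  have "c \<le> e" if e: "eigenvalue G e" for e
  proof -
    obtain v where v: "v \<in> carrier_vec r" "v \<noteq> 0\<^sub>v r" and "v \<bullet> (G *\<^sub>v v) = e * (v \<bullet> v)"
      using eigenvalue_imp_quadratic_form[OF G e] by blast
    then show ?thesis
      using bound scalar_prod_self_pos[OF v] by (auto simp: mult_le_cancel_right)
  qed
  then have sigma_eq: "sigma_min M = sqrt c"
    unfolding sigma_min_def singular_values_def G_def[symmetric]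
    using finite_eigenvalues[OF G] c by (intro Min_eqI) auto
  have c_nonneg: "0 \<le> c"
    using gram_eigenvalue_nonneg[OF M] c by (simp add: G_def)
  then have sq: "(sigma_min M)\<^sup>2 = c"
    by (simp add: sigma_eq)
  show "0 \<le> sigma_min M"
    using c_nonneg by (simp add: sigma_eq)
  show "\<forall>x\<in>carrier_vec r. (sigma_min M)\<^sup>2 * (x \<bullet> x) \<le> (M *\<^sub>v x) \<bullet> (M *\<^sub>v x)"
    using bound gram_quadratic_form[OF M] by (simp add: sq G_def)
  show "\<exists>x\<in>carrier_vec r. x \<noteq> 0\<^sub>v r \<and> (M *\<^sub>v x) \<bullet> (M *\<^sub>v x) = (sigma_min M)\<^sup>2 * (x \<bullet> x)"
    using eigenvalue_imp_quadratic_form[OF G c] gram_quadratic_form[OF M] by (auto simp: sq G_def)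
qed

lemma orthonormal_cols_preserves_norm:
  fixes W :: "real mat"
  assumes W: "W \<in> carrier_mat r s" "orthonormal_cols W" and y: "y \<in> carrier_vec s"
  shows "(W *\<^sub>v y) \<bullet> (W *\<^sub>v y) = y \<bullet> y"
proof -
  have "(W *\<^sub>v y) \<bullet> (W *\<^sub>v y) = y \<bullet> ((transpose_mat W * W) *\<^sub>v y)"
    by (rule gram_quadratic_form[OF W(1) y, symmetric])
  also have "transpose_mat W * W = 1\<^sub>m s"
    using W by (simp add: orthonormal_cols_def)
  finally show ?thesis
    using y by simp
qed

lemma orthonormal_cols_dim_pos:
  fixes W :: "real mat"
  assumes W: "W \<in> carrier_mat r s" "orthonormal_cols W" and s: "0 < s"
  shows "0 < r"
proof (rule ccontr)
  assume "\<not> 0 < r"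
  then have "(transpose_mat W * W) $$ (0, 0) = 0"
    using W s by (simp add: scalar_prod_def)
  moreover have "(transpose_mat W * W) $$ (0, 0) = 1"
    using W s by (simp add: orthonormal_cols_def)
  ultimately show False
    by simp
qed

lemma sigma_max_mult_orthonormal_cols_le:
  fixes M W :: "real mat"
  assumes M: "M \<in> carrier_mat p r" and W: "W \<in> carrier_mat r s" "orthonormal_cols W"
    and s: "0 < s"
  shows "sigma_max (M * W) \<le> sigma_max M"
proof -
  have r: "0 < r"
    using orthonormal_cols_dim_pos[OF W s] .
  have MW: "M * W \<in> carrier_mat p s"
    using M W by simp
  obtain y where y: "y \<in> carrier_vec s" "y \<noteq> 0\<^sub>v s"
    and attained: "((M * W) *\<^sub>v y) \<bullet> ((M * W) *\<^sub>v y) = (sigma_max (M * W))\<^sup>2 * (y \<bullet> y)"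
    using sigma_max_variational(3)[OF MW s] by blast
  have "(sigma_max (M * W))\<^sup>2 * (y \<bullet> y) = (M *\<^sub>v (W *\<^sub>v y)) \<bullet> (M *\<^sub>v (W *\<^sub>v y))"
    using attained M W y by simp
  also have "\<dots> \<le> (sigma_max M)\<^sup>2 * ((W *\<^sub>v y) \<bullet> (W *\<^sub>v y))"
    using sigma_max_variational(2)[OF M r] W y by simp
  also have "\<dots> = (sigma_max M)\<^sup>2 * (y \<bullet> y)"
    using orthonormal_cols_preserves_norm[OF W y(1)] by simp
  finally have "(sigma_max (M * W))\<^sup>2 \<le> (sigma_max M)\<^sup>2"
    using scalar_prod_self_pos[OF y] by simp
  then show ?thesis
    using sigma_max_variational(1)[OF M r] by (rule power2_le_imp_le)
qed

lemma sigma_min_mult_orthonormal_cols_ge: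
  fixes M W :: "real mat"
  assumes M: "M \<in> carrier_mat p r" and W: "W \<in> carrier_mat r s" "orthonormal_cols W"
    and s: "0 < s"
  shows "sigma_min M \<le> sigma_min (M * W)"
proof -
  have r: "0 < r"
    using orthonormal_cols_dim_pos[OF W s] .
  have MW: "M * W \<in> carrier_mat p s"
    using M W by simp
  obtain y where y: "y \<in> carrier_vec s" "y \<noteq> 0\<^sub>v s"
    and attained: "((M * W) *\<^sub>v y) \<bullet> ((M * W) *\<^sub>v y) = (sigma_min (M * W))\<^sup>2 * (y \<bullet> y)"
    using sigma_min_variational(3)[OF MW s] by blast
  have "(sigma_min M)\<^sup>2 * (y \<bullet> y) = (sigma_min M)\<^sup>2 * ((W *\<^sub>v y) \<bullet> (W *\<^sub>v y))"
    using orthonormal_cols_preserves_norm[OF W y(1)] by simp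
  also have "\<dots> \<le> (M *\<^sub>v (W *\<^sub>v y)) \<bullet> (M *\<^sub>v (W *\<^sub>v y))"
    using sigma_min_variational(2)[OF M r] W y by simp
  also have "\<dots> = (sigma_min (M * W))\<^sup>2 * (y \<bullet> y)"
    using attained M W y by simp
  finally have "(sigma_min M)\<^sup>2 \<le> (sigma_min (M * W))\<^sup>2"
    using scalar_prod_self_pos[OF y] by simp
  then show ?thesis
    using sigma_min_variational(1)[OF MW s] by (rule power2_le_imp_le)
qed

lemma sigma_min_le_sigma_max:
  fixes M :: "real mat"
  assumes M: "M \<in> carrier_mat p r" and r: "0 < r"
  shows "sigma_min M \<le> sigma_max M"
proof -
  obtain x where x: "x \<in> carrier_vec r" "x \<noteq> 0\<^sub>v r"
    and "(M *\<^sub>v x) \<bullet> (M *\<^sub>v x) = (sigma_min M)\<^sup>2 * (x \<bullet> x)"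
    using sigma_min_variational(3)[OF M r] by blast
  moreover have "(M *\<^sub>v x) \<bullet> (M *\<^sub>v x) \<le> (sigma_max M)\<^sup>2 * (x \<bullet> x)"
    using sigma_max_variational(2)[OF M r] x(1) by blast
  ultimately have "(sigma_min M)\<^sup>2 * (x \<bullet> x) \<le> (sigma_max M)\<^sup>2 * (x \<bullet> x)"
    by simp
  then have "(sigma_min M)\<^sup>2 \<le> (sigma_max M)\<^sup>2"
    using scalar_prod_self_pos[OF x] by simp
  then show ?thesis
    using sigma_max_variational(1)[OF M r] by (rule power2_le_imp_le)
qed

lemma kappa_ge_1:
  fixes M :: "real mat"
  assumes M: "M \<in> carrier_mat p r"
  shows "1 \<le> kappa M"
proof -
  have "1 \<le> sigma_max M / sigma_min M" if r: "0 < r" and pos: "0 < sigma_min M"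
    using sigma_min_le_sigma_max[OF M r] pos by simp
  then show ?thesis
    using M sigma_min_variational(1)[OF M] by (auto simp: kappa_def)
qed

lemma kappa_mult_orthonormal_cols_le:
  fixes M W :: "real mat"
  assumes M: "M \<in> carrier_mat p r" and W: "W \<in> carrier_mat r s" "orthonormal_cols W"
  shows "kappa (M * W) \<le> kappa M"
proof (cases "s = 0")
  case True
  then show ?thesis
    using W kappa_ge_1[OF M] by (simp add: kappa_def)
next
  case False
  then have s: "0 < s" and r: "0 < r"
    using orthonormal_cols_dim_pos[OF W] by auto
  have MW: "M * W \<in> carrier_mat p s"
    using M W by simp
  have max_le: "sigma_max (M * W) \<le> sigma_max M"
    and min_ge: "sigma_min M \<le> sigma_min (M * W)"
    using sigma_max_mult_orthonormal_cols_le[OF M W s] sigma_min_mult_orthonormal_cols_ge[OF M W s] .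
  show ?thesis
  proof (cases "sigma_min M = 0")
    case True
    then show ?thesis
      using M r by (simp add: kappa_def)
  next
    case False
    then have pos: "0 < sigma_min M"
      using sigma_min_variational(1)[OF M r] by simp
    have "sigma_max (M * W) / sigma_min (M * W) \<le> sigma_max M / sigma_min M"
      using max_le min_ge pos sigma_max_variational(1)[OF MW s] by (intro frac_le) auto
    then show ?thesis
      using M W MW r s pos min_ge by (simp add: kappa_def)
  qed
qed

lemma hcat_carrier:
  "Q \<in> carrier_mat n a \<Longrightarrow> P \<in> carrier_mat n b \<Longrightarrow> hcat Q P \<in> carrier_mat n (a + b)"
  unfolding hcat_def by auto

lemma row_hcat:
  assumes "Q \<in> carrier_mat n a" "P \<in> carrier_mat n b" "i < n"
  shows "row (hcat Q P) i = row Q i @\<^sub>v row P i"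
  using assms unfolding hcat_def by (intro eq_vecI) auto

lemma col_hcat_left:
  assumes "Q \<in> carrier_mat n a" "P \<in> carrier_mat n b" "j < a"
  shows "col (hcat Q P) j = col Q j"
  using assms unfolding hcat_def by (intro eq_vecI) auto

lemma col_hcat_right:
  assumes "Q \<in> carrier_mat n a" "P \<in> carrier_mat n b" "j < b"
  shows "col (hcat Q P) (a + j) = col P j"
  using assms unfolding hcat_def by (intro eq_vecI) auto

lemma orthogonal_square_hcat_complement:
  fixes Q P :: "real mat"
  assumes Q: "Q \<in> carrier_mat n a" and P: "P \<in> carrier_mat n b"
    and orth: "orthogonal_square (hcat Q P)"
  shows "Q * transpose_mat Q + P * transpose_mat P = 1\<^sub>m n"
proof -
  define H where "H = hcat Q P"
  have H: "H \<in> carrier_mat n n"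
    using hcat_carrier[OF Q P] orth by (simp add: H_def orthogonal_square_def)
  have "transpose_mat H * H = 1\<^sub>m n"
    using orth H by (simp add: H_def orthogonal_square_def)
  then have HH: "H * transpose_mat H = 1\<^sub>m n"
    using mat_mult_left_right_inverse[of "transpose_mat H" n H] H by simp
  show ?thesis
  proof (rule eq_matI)
    fix i j assume "i < dim_row (1\<^sub>m n :: real mat)" "j < dim_col (1\<^sub>m n :: real mat)"
    then have ij: "i < n" "j < n"
      by simp_all
    have "(Q * transpose_mat Q + P * transpose_mat P) $$ (i, j)
        = (row Q i @\<^sub>v row P i) \<bullet> (row Q j @\<^sub>v row P j)"
      using Q P ij by (simp add: scalar_prod_append[of _ a _ b])
    also have "\<dots> = (H * transpose_mat H) $$ (i, j)"
      using Q P H ij by (simp add: H_def row_hcat)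
    finally show "(Q * transpose_mat Q + P * transpose_mat P) $$ (i, j) = 1\<^sub>m n $$ (i, j)"
      unfolding HH .
  qed (use Q P in auto)
qed

lemma orthogonal_square_hcat_cross:
  fixes Q P :: "real mat"
  assumes Q: "Q \<in> carrier_mat n a" and P: "P \<in> carrier_mat n b"
    and orth: "orthogonal_square (hcat Q P)" and i: "i < a" and j: "j < b"
  shows "col Q i \<bullet> col P j = 0"
proof -
  define H where "H = hcat Q P"
  have H: "H \<in> carrier_mat n (a + b)"
    using hcat_carrier[OF Q P] by (simp add: H_def)
  have "col Q i \<bullet> col P j = (transpose_mat H * H) $$ (i, a + j)"
    using H i j by (simp add: H_def col_hcat_left[OF Q P] col_hcat_right[OF Q P])
  also have "\<dots> = 0"
    using orth H i j by (simp add: H_def orthogonal_square_def)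
  finally show ?thesis .
qed

lemma hcat_orthogonal_complement_factor:
  fixes Q P Q' P' :: "real mat"
  assumes Q: "Q \<in> carrier_mat n a" and P: "P \<in> carrier_mat n b"
    and orth: "orthogonal_square (hcat Q P)"
    and Q': "Q' \<in> carrier_mat n a'" and P': "P' \<in> carrier_mat n b'"
    and orth': "orthogonal_square (hcat Q' P')"
    and a: "a \<le> a'" and cols: "\<And>j. j < a \<Longrightarrow> col Q j = col Q' j"
  shows "P * (transpose_mat P * P') = P'"
proof -
  have cross: "transpose_mat Q * P' = 0\<^sub>m a b'"
    using Q P' a orthogonal_square_hcat_cross[OF Q' P' orth'] by (intro eq_matI) (auto simp: cols)
  have "P' = (Q * transpose_mat Q + P * transpose_mat P) * P'"
    using P' by (simp add: orthogonal_square_hcat_complement[OF Q P orth])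
  also have "\<dots> = Q * (transpose_mat Q * P') + P * (transpose_mat P * P')"
    using Q P P' by (simp add: add_mult_distrib_mat[of _ n n] assoc_mult_mat[of _ n _ _ n _ b'])
  also have "\<dots> = P * (transpose_mat P * P')"
    using Q P P' by (simp add: cross)
  finally show ?thesis ..
qed

lemma orthonormal_cols_mult_cancel_left:
  fixes P W :: "real mat"
  assumes P: "P \<in> carrier_mat n b" "orthonormal_cols P" and W: "W \<in> carrier_mat b c"
    and PW: "orthonormal_cols (P * W)"
  shows "orthonormal_cols W"
proof -
  have "transpose_mat P * (P * W) = (transpose_mat P * P) * W"
    using P W by (simp add: assoc_mult_mat[of _ b n _ b _ c])
  also have "\<dots> = W"
    using P W by (simp add: orthonormal_cols_def)
  finally have "transpose_mat (P * W) * (P * W) = transpose_mat W * W"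
    using P W by (simp add: transpose_mult[of _ n b _ c] assoc_mult_mat[of _ c b _ n _ c])
  then show ?thesis
    using W PW by (simp add: orthonormal_cols_def)
qed

lemma Qmat_carrier: "Qmat n q k \<in> carrier_mat n k"
  unfolding Qmat_def using mat_of_cols_carrier(1)[of n "map q [1..<Suc k]"] by (simp del: upt_Suc)

lemma col_Qmat:
  assumes "j < k"
  shows "col (Qmat n q k) j = vec n (\<lambda>i. q (Suc j) $ i)"
  using assms unfolding Qmat_def mat_of_cols_def by (simp del: upt_Suc)

theorem theorem3:
  fixes A :: "real mat" and b :: "real vec" and L :: "real mat"
    and m n p :: nat
    and \<alpha> \<beta> :: "nat \<Rightarrow> real" and q pp :: "nat \<Rightarrow> real vec"
    and Qperp :: "nat \<Rightarrow> real mat"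
    and k :: nat
  assumes A: "A \<in> carrier_mat m n"
    and b: "b \<in> carrier_vec m"
    and L: "L \<in> carrier_mat p n"
    (* Golub--Kahan bidiagonalization, no breakdown in the steps producing q_1..q_n *)
    and beta1: "\<beta> 1 = vnorm b"
    and p1: "pp 1 = (1 / \<beta> 1) \<cdot>\<^sub>v b"
    and q0: "q 0 = 0\<^sub>v n"
    and q_dim: "\<And>i. 1 \<le> i \<Longrightarrow> i \<le> n \<Longrightarrow> q i \<in> carrier_vec n"
    and p_dim: "\<And>i. 1 \<le> i \<Longrightarrow> i \<le> n \<Longrightarrow> pp i \<in> carrier_vec m"
    and rec_q: "\<And>i. 1 \<le> i \<Longrightarrow> i \<le> n \<Longrightarrow>
                   \<alpha> i \<cdot>\<^sub>v q i = transpose_mat A *\<^sub>v pp i - \<beta> i \<cdot>\<^sub>v q (i - 1)"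
    and rec_p: "\<And>i. 1 \<le> i \<Longrightarrow> i < n \<Longrightarrow>
                   \<beta> (i + 1) \<cdot>\<^sub>v pp (i + 1) = A *\<^sub>v q i - \<alpha> i \<cdot>\<^sub>v pp i"
    and alpha_pos: "\<And>i. 1 \<le> i \<Longrightarrow> i \<le> n \<Longrightarrow> \<alpha> i > 0"
    and beta_pos: "\<And>i. 1 \<le> i \<Longrightarrow> i \<le> n \<Longrightarrow> \<beta> i > 0"
    and q_unit: "\<And>i. 1 \<le> i \<Longrightarrow> i \<le> n \<Longrightarrow> vnorm (q i) = 1"
    and p_unit: "\<And>i. 1 \<le> i \<Longrightarrow> i \<le> n \<Longrightarrow> vnorm (pp i) = 1"
    (* orthogonal complements Q_k^perp *)
    and Qperp_dim: "\<And>j. 1 \<le> j \<Longrightarrow> j \<le> n \<Longrightarrow> Qperp j \<in> carrier_mat n (n - j)"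
    and Qperp_on: "\<And>j. 1 \<le> j \<Longrightarrow> j \<le> n \<Longrightarrow> orthonormal_cols (Qperp j)"
    and Qperp_orth: "\<And>j. 1 \<le> j \<Longrightarrow> j \<le> n \<Longrightarrow> orthogonal_square (hcat (Qmat n q j) (Qperp j))"
    and k: "2 \<le> k" "k \<le> n - 1"
    and pk: "p \<ge> n - k"
  shows "kappa (L * Qperp k) \<ge> kappa (L * Qperp (k + 1))"
proof -
  have k1: "1 \<le> k" and kn: "k \<le> n" and k1n: "k + 1 \<le> n"
    using k by auto
  define W where "W = transpose_mat (Qperp k) * Qperp (k + 1)"
  have P: "Qperp k \<in> carrier_mat n (n - k)" and P': "Qperp (k + 1) \<in> carrier_mat n (n - (k + 1))"
    using Qperp_dim k1 k1n by auto
  have W: "W \<in> carrier_mat (n - k) (n - (k + 1))"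
    using P P' by (simp add: W_def)
  have factor: "Qperp k * W = Qperp (k + 1)"
    unfolding W_def
    by (rule hcat_orthogonal_complement_factor[OF Qmat_carrier P Qperp_orth[OF k1 kn]
          Qmat_carrier P' Qperp_orth[OF _ k1n]]) (simp_all add: col_Qmat)
  have "orthonormal_cols W"
    using orthonormal_cols_mult_cancel_left[OF P Qperp_on[OF k1 kn] W] factor Qperp_on[OF _ k1n] by simp
  moreover have "L * Qperp (k + 1) = (L * Qperp k) * W"
    using L P W by (simp add: factor)
  ultimately show ?thesis
    using kappa_mult_orthonormal_cols_le[of "L * Qperp k" p "n - k"] L P W by simp
qed

end
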